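(* There exists a dynamic network congestion game with a Nash equilibrium $\pi$ such that for every blind Nash equilibrium $\pi'$ of that game, the social cost of $\pi$ is strictly smaller than the social cost of $\pi'$.
   Context: Let $\mathcal F$ be the set of non-decreasing piecewise-affine functions $\mathbb N\to\mathbb N$ with finitely many pieces. An arena is $\mathcal A=(V,E,\mathsf{src},\mathsf{tgt})$ with $V$ finite, $E$ a partial function $V\times V\to\mathcal F$ (edge $e$ has cost function $\ell_e$); $\mathsf{tgt}$ has only a self-loop of constant cost $0$ and is reachable from every state. A dynamic NCG $(\mathcal A,n)$ has players $[n]$, all starting in $\mathsf{src}$; in each step each player simultaneously picks an edge $e_i$ leaving their current state, moves along it and pays $\ell_{e_i}(u_i)$ with $u_i$ the number of players choosing $e_i$ in that step. Strategies map finite histories to edges leaving the player's current state; $\mathrm{cost}_i(\sigma)$ is player $i$'s total payment along the outcome of profile $\sigma$ until reaching $\mathsf{tgt}$, and the social cost is $\sum_i\mathrm{cost}_i(\sigma)$. A Nash equilibrium is a profile in which no player can lower their cost by unilaterally changing strategy. A strategy is blind if it depends only on the states visited by the player itself (follows a fixed path of $\mathcal A$); a blind Nash equilibrium is a blind profile where no player can lower their cost by switching to another blind strategy. *)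

theory Defs
  imports Complex_Main "HOL-Library.Extended_Nat"
begin

text \<open>Non-decreasing piecewise-affine functions with finitely many pieces: there is a
finite sorted list of breakpoints; the piece containing x is indexed by the number of
breakpoints \<le> x, and on each piece f coincides with an affine function.\<close>
definition piecewise_affine_fun :: "(nat \<Rightarrow> nat) \<Rightarrow> bool" where
  "piecewise_affine_fun f \<longleftrightarrow> mono f \<and>
     (\<exists>ts :: nat list. \<exists>a b :: nat \<Rightarrow> real. sorted ts \<and>
        (\<forall>x. real (f x) = a (card {t \<in> set ts. t \<le> x}) * real x + b (card {t \<in> set ts. t \<le> x})))"

type_synonym edges = "nat \<Rightarrow> nat \<Rightarrow> (nat \<Rightarrow> nat) option"

definition is_edge :: "edges \<Rightarrow> nat \<Rightarrow> nat \<Rightarrow> bool" where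
  "is_edge E u v \<longleftrightarrow> E u v \<noteq> None"

definition arena :: "nat set \<Rightarrow> edges \<Rightarrow> nat \<Rightarrow> nat \<Rightarrow> bool" where
  "arena V E src tgt \<longleftrightarrow> finite V \<and> src \<in> V \<and> tgt \<in> V \<and>
     (\<forall>u v l. E u v = Some l \<longrightarrow> u \<in> V \<and> v \<in> V \<and> piecewise_affine_fun l) \<and>
     (\<forall>v. is_edge E tgt v \<longleftrightarrow> v = tgt) \<and> E tgt tgt = Some (\<lambda>_. 0) \<and>
     (\<forall>v\<in>V. (v, tgt) \<in> {(x, y). is_edge E x y}\<^sup>*)"

text \<open>A configuration gives the current state of every player; a history is the (nonempty)
list of configurations so far. A strategy maps a history to the next state of the player,
i.e. to an edge leaving the player's current state.\<close>
type_synonym config = "nat \<Rightarrow> nat"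
type_synonym history = "config list"
type_synonym strategy = "history \<Rightarrow> nat"
type_synonym profile = "nat \<Rightarrow> strategy"

definition valid_strategy :: "nat set \<Rightarrow> edges \<Rightarrow> nat \<Rightarrow> strategy \<Rightarrow> bool" where
  "valid_strategy V E i s \<longleftrightarrow>
     (\<forall>h. h \<noteq> [] \<longrightarrow> last h i \<in> V \<longrightarrow> is_edge E (last h i) (s h))"

definition valid_profile :: "nat set \<Rightarrow> edges \<Rightarrow> nat \<Rightarrow> profile \<Rightarrow> bool" where
  "valid_profile V E n \<sigma> \<longleftrightarrow> (\<forall>i<n. valid_strategy V E i (\<sigma> i))"

text \<open>History of the outcome after k steps (players outside [n] are dummies kept at src).\<close>
fun hist :: "nat \<Rightarrow> nat \<Rightarrow> profile \<Rightarrow> nat \<Rightarrow> history" where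
  "hist src n \<sigma> 0 = [\<lambda>_. src]"
| "hist src n \<sigma> (Suc k) = hist src n \<sigma> k @ [\<lambda>i. if i < n then \<sigma> i (hist src n \<sigma> k) else src]"

definition pos :: "nat \<Rightarrow> nat \<Rightarrow> profile \<Rightarrow> nat \<Rightarrow> nat \<Rightarrow> nat" where
  "pos src n \<sigma> k i = last (hist src n \<sigma> k) i"

definition load :: "nat \<Rightarrow> nat \<Rightarrow> profile \<Rightarrow> nat \<Rightarrow> nat \<Rightarrow> nat \<Rightarrow> nat" where
  "load src n \<sigma> k u v = card {j. j < n \<and> pos src n \<sigma> k j = u \<and> pos src n \<sigma> (Suc k) j = v}"

definition step_cost :: "edges \<Rightarrow> nat \<Rightarrow> nat \<Rightarrow> profile \<Rightarrow> nat \<Rightarrow> nat \<Rightarrow> nat" where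
  "step_cost E src n \<sigma> i k =
     (let u = pos src n \<sigma> k i; v = pos src n \<sigma> (Suc k) i
      in the (E u v) (load src n \<sigma> k u v))"

definition cost :: "edges \<Rightarrow> nat \<Rightarrow> nat \<Rightarrow> nat \<Rightarrow> profile \<Rightarrow> nat \<Rightarrow> enat" where
  "cost E src tgt n \<sigma> i =
     (if \<exists>K. pos src n \<sigma> K i = tgt
      then enat (\<Sum>k < (LEAST K. pos src n \<sigma> K i = tgt). step_cost E src n \<sigma> i k)
      else \<infinity>)"

definition social_cost :: "edges \<Rightarrow> nat \<Rightarrow> nat \<Rightarrow> nat \<Rightarrow> profile \<Rightarrow> enat" where
  "social_cost E src tgt n \<sigma> = (\<Sum>i<n. cost E src tgt n \<sigma> i)"

definition nash_eq :: "nat set \<Rightarrow> edges \<Rightarrow> nat \<Rightarrow> nat \<Rightarrow> nat \<Rightarrow> profile \<Rightarrow> bool" where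
  "nash_eq V E src tgt n \<sigma> \<longleftrightarrow> valid_profile V E n \<sigma> \<and>
     (\<forall>i<n. \<forall>\<tau>. valid_strategy V E i \<tau> \<longrightarrow>
        cost E src tgt n \<sigma> i \<le> cost E src tgt n (\<sigma>(i := \<tau>)) i)"

definition blind_strategy :: "nat \<Rightarrow> strategy \<Rightarrow> bool" where
  "blind_strategy i s \<longleftrightarrow> (\<exists>g. \<forall>h. s h = g (map (\<lambda>c. c i) h))"

definition blind_nash_eq :: "nat set \<Rightarrow> edges \<Rightarrow> nat \<Rightarrow> nat \<Rightarrow> nat \<Rightarrow> profile \<Rightarrow> bool" where
  "blind_nash_eq V E src tgt n \<sigma> \<longleftrightarrow> valid_profile V E n \<sigma> \<and>
     (\<forall>i<n. blind_strategy i (\<sigma> i)) \<and>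
     (\<forall>i<n. \<forall>\<tau>. valid_strategy V E i \<tau> \<longrightarrow> blind_strategy i \<tau> \<longrightarrow>
        cost E src tgt n \<sigma> i \<le> cost E src tgt n (\<sigma>(i := \<tau>)) i)"

end

theory Submission
  imports Defs
begin

(* Two players travel from state 0 to state 4 along one of the routes 0-2-3-4, 0-1-2-3-4 and
   0-1-3-4, and every edge is cheaper for a player who uses it alone.  In the equilibrium the
   first player takes 0-2-3-4 and the second 0-1-2-3-4, each paying 4.  The second player
   watches whether the first one has also entered state 1 and, if so, turns to 1-3 herself;
   this threat makes every deviation of the first player cost at least 6.  A blind player
   cannot carry out such a threat, and checking the nine pairs of routes shows that every pair
   in which neither player gains by switching to 0-1-3-4 has total cost above 8. *)

lemma hist_not_Nil: "hist src n \<sigma> k \<noteq> []"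
  by (cases k) simp_all

lemma pos_0 [simp]: "pos src n \<sigma> 0 i = src"
  by (simp add: pos_def)

lemma pos_Suc: "pos src n \<sigma> (Suc k) i = (if i < n then \<sigma> i (hist src n \<sigma> k) else src)"
  by (simp add: pos_def)

lemma last_hist: "last (hist src n \<sigma> k) = pos src n \<sigma> k"
  by (simp add: pos_def fun_eq_iff)

lemma valid_profile_pos_step:
  assumes "arena V E src tgt" "valid_profile V E n \<sigma>" "i < n"
  shows "is_edge E (pos src n \<sigma> k i) (pos src n \<sigma> (Suc k) i)"
proof -
  have step: "is_edge E (pos src n \<sigma> k i) (pos src n \<sigma> (Suc k) i)" if "pos src n \<sigma> k i \<in> V" for k
    using assms(2,3) that hist_not_Nil[of src n \<sigma> k]
    unfolding valid_profile_def valid_strategy_def by (metis last_hist pos_Suc)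
  have "pos src n \<sigma> k i \<in> V" for k
  proof (induction k)
    case 0
    then show ?case using assms(1) by (simp add: arena_def)
  next
    case (Suc k)
    then show ?case using step[OF Suc] assms(1) by (auto simp: arena_def is_edge_def)
  qed
  then show ?thesis by (rule step)
qed

lemma blind_player_pos:
  assumes "blind_strategy j (\<sigma> j)" "\<sigma>' j = \<sigma> j" "j < n"
  shows "pos src n \<sigma>' k j = pos src n \<sigma> k j"
proof -
  obtain g where g: "\<And>h. \<sigma> j h = g (map (\<lambda>c. c j) h)"
    using assms(1) unfolding blind_strategy_def by blast
  have "map (\<lambda>c. c j) (hist src n \<sigma>' k) = map (\<lambda>c. c j) (hist src n \<sigma> k)"
    by (induction k) (use assms(2,3) in \<open>simp_all add: g\<close>)
  then have "last (map (\<lambda>c. c j) (hist src n \<sigma>' k)) = last (map (\<lambda>c. c j) (hist src n \<sigma> k))"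
    by simp
  then show ?thesis by (simp add: pos_def last_map hist_not_Nil)
qed

lemma cost_eq_sum:
  assumes "pos src n \<sigma> K i = tgt" "\<forall>k<K. pos src n \<sigma> k i \<noteq> tgt"
  shows "cost E src tgt n \<sigma> i = enat (\<Sum>k<K. step_cost E src n \<sigma> i k)"
proof -
  have "(LEAST K. pos src n \<sigma> K i = tgt) = K"
    by (rule Least_equality) (use assms in \<open>auto simp: not_less[symmetric]\<close>)
  then show ?thesis using assms(1) by (auto simp: cost_def)
qed

lemma load_two_players:
  assumes "i < 2"
  shows "load src 2 \<sigma> k (pos src 2 \<sigma> k i) (pos src 2 \<sigma> (Suc k) i) =
    (if pos src 2 \<sigma> k (1 - i) = pos src 2 \<sigma> k i \<and> pos src 2 \<sigma> (Suc k) (1 - i) = pos src 2 \<sigma> (Suc k) i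
     then 2 else 1)"
proof -
  let ?uses = "\<lambda>j. pos src 2 \<sigma> k j = pos src 2 \<sigma> k i \<and> pos src 2 \<sigma> (Suc k) j = pos src 2 \<sigma> (Suc k) i"
  have "j = i \<or> j = 1 - i" if "j < 2" for j
    using assms that by auto
  then have "{j. j < 2 \<and> ?uses j} = insert i (if ?uses (1 - i) then {1 - i} else {})"
    using assms by auto
  moreover have "i \<noteq> 1 - i"
    using assms by arith
  ultimately show ?thesis by (simp add: load_def)
qed

lemma social_cost_two_players:
  "social_cost E src tgt 2 \<sigma> = cost E src tgt 2 \<sigma> 0 + cost E src tgt 2 \<sigma> 1"
  by (simp add: social_cost_def eval_nat_numeral)

definition shared_walk_cost :: "edges \<Rightarrow> (nat \<Rightarrow> nat) \<Rightarrow> (nat \<Rightarrow> nat) \<Rightarrow> nat \<Rightarrow> nat" where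
  "shared_walk_cost E x y K =
     (\<Sum>k<K. the (E (x k) (x (Suc k))) (if y k = x k \<and> y (Suc k) = x (Suc k) then 2 else 1))"

lemma cost_two_players:
  assumes "i < 2" "\<And>k. pos src 2 \<sigma> k i = x k" "\<And>k. pos src 2 \<sigma> k (1 - i) = y k"
    "x K = tgt" "\<forall>k<K. x k \<noteq> tgt"
  shows "cost E src tgt 2 \<sigma> i = enat (shared_walk_cost E x y K)"
  using cost_eq_sum[of src 2 \<sigma> K i tgt E] load_two_players[OF assms(1), of src \<sigma>] assms(2-)
  by (simp add: step_cost_def shared_walk_cost_def Let_def)

definition walk_strategy :: "nat \<Rightarrow> (nat \<Rightarrow> nat) \<Rightarrow> strategy" where
  "walk_strategy i f h = f (last (map (\<lambda>c. c i) h))"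

lemma blind_walk_strategy: "blind_strategy i (walk_strategy i f)"
  unfolding blind_strategy_def walk_strategy_def by (rule exI[of _ "\<lambda>l. f (last l)"]) simp

lemma valid_walk_strategy:
  "(\<And>v. v \<in> V \<Longrightarrow> is_edge E v (f v)) \<Longrightarrow> valid_strategy V E i (walk_strategy i f)"
  by (simp add: valid_strategy_def walk_strategy_def last_map)

lemma pos_Suc_walk_strategy:
  "\<sigma> i = walk_strategy i f \<Longrightarrow> i < n \<Longrightarrow> pos src n \<sigma> (Suc k) i = f (pos src n \<sigma> k i)"
  by (simp add: pos_Suc walk_strategy_def last_map hist_not_Nil last_hist)

definition solo_shared :: "nat \<Rightarrow> nat \<Rightarrow> nat \<Rightarrow> nat" where
  "solo_shared a b u = (if u \<le> 1 then a else b)"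

lemma piecewise_affine_solo_shared: "a \<le> b \<Longrightarrow> piecewise_affine_fun (solo_shared a b)"
  unfolding piecewise_affine_fun_def
proof (intro conjI)
  show "a \<le> b \<Longrightarrow> mono (solo_shared a b)"
    by (auto simp: mono_def solo_shared_def)
  show "\<exists>ts a' b'. sorted ts \<and> (\<forall>x. real (solo_shared a b x) =
          a' (card {t \<in> set ts. t \<le> x}) * real x + b' (card {t \<in> set ts. t \<le> x}))"
    by (rule exI[of _ "[2]"], rule exI[of _ "\<lambda>_. 0"],
        rule exI[of _ "\<lambda>p. if p = 0 then real a else real b"]) (auto simp: solo_shared_def)
qed

lemma piecewise_affine_const: "piecewise_affine_fun (\<lambda>_. c)"
  unfolding piecewise_affine_fun_def
  by (rule conjI, simp add: mono_def,
      rule exI[of _ "[]"], rule exI[of _ "\<lambda>_. 0"], rule exI[of _ "\<lambda>_. real c"]) simp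

definition game_states :: "nat set" where
  "game_states = {0..4}"

definition game_edges :: edges where
  "game_edges u v = map_of
     [((0, 1), solo_shared 0 2), ((0, 2), solo_shared 1 1), ((1, 2), solo_shared 1 4),
      ((1, 3), solo_shared 0 1), ((2, 3), solo_shared 2 4), ((3, 4), solo_shared 1 4),
      ((4, 4), \<lambda>_. 0)] (u, v)"

lemma is_edge_game_edges:
  "is_edge game_edges u v \<longleftrightarrow> (u, v) \<in> {(0, 1), (0, 2), (1, 2), (1, 3), (2, 3), (3, 4), (4, 4)}"
  by (auto simp: is_edge_def game_edges_def)

lemma arena_game: "arena game_states game_edges 0 4"
proof -
  let ?R = "{(x, y). is_edge game_edges x y}"
  have reach: "(v, 4) \<in> ?R\<^sup>*" if "v \<in> game_states" for v
  proof -
    have "v \<le> 4" using that by (simp add: game_states_def)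
    then show ?thesis
    proof (induction rule: inc_induct)
      case (step v)
      then have "(v, Suc v) \<in> ?R" by (auto simp: is_edge_game_edges)
      then show ?case using step.IH by (rule converse_rtrancl_into_rtrancl)
    qed simp
  qed
  have edges: "u \<in> game_states \<and> v \<in> game_states \<and> piecewise_affine_fun l"
    if "game_edges u v = Some l" for u v l
    using map_of_SomeD[OF that[unfolded game_edges_def]]
    by (auto simp: game_states_def piecewise_affine_solo_shared piecewise_affine_const)
  have "game_edges 4 4 = Some (\<lambda>_. 0)"
    by (simp add: game_edges_def)
  moreover have "is_edge game_edges 4 v \<longleftrightarrow> v = 4" for v
    by (simp add: is_edge_game_edges)
  moreover have "finite game_states" "0 \<in> game_states" "4 \<in> game_states"
    by (simp_all add: game_states_def)
  ultimately show ?thesis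
    unfolding arena_def using reach edges by blast
qed

datatype route = Via2 | Via12 | Via13

fun route_states :: "route \<Rightarrow> nat list" where
  "route_states Via2 = [0, 2, 3, 4]"
| "route_states Via12 = [0, 1, 2, 3, 4]"
| "route_states Via13 = [0, 1, 3, 4]"

definition follow :: "route \<Rightarrow> nat \<Rightarrow> nat" where
  "follow r k = (if k < length (route_states r) then route_states r ! k else 4)"

lemma route_eqI: "follow r 1 = follow r' 1 \<Longrightarrow> follow r 2 = follow r' 2 \<Longrightarrow> r = r'"
  by (cases r; cases r') (simp_all add: follow_def)

lemma edge_walk_stays_at_target:
  assumes step: "\<And>k. is_edge game_edges (x k) (x (Suc k))" and "x k = 4"
  shows "x (k + m) = 4"
proof (induction m)
  case (Suc m)
  then show ?case using step[of "k + m"] by (auto simp: is_edge_game_edges)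
qed (use assms(2) in simp)

lemma edge_walk_prefix_route:
  assumes start: "x 0 = 0" and step: "\<And>k. is_edge game_edges (x k) (x (Suc k))"
  obtains r where "map x [0..<length (route_states r)] = route_states r"
proof -
  have from0: "x (Suc k) = 1 \<or> x (Suc k) = 2" if "x k = 0" for k
    using step[of k] that by (auto simp: is_edge_game_edges)
  have from1: "x (Suc k) = 2 \<or> x (Suc k) = 3" if "x k = 1" for k
    using step[of k] that by (auto simp: is_edge_game_edges)
  have from2: "x (Suc k) = 3" if "x k = 2" for k
    using step[of k] that by (auto simp: is_edge_game_edges)
  have from3: "x (Suc k) = 4" if "x k = 3" for k
    using step[of k] that by (auto simp: is_edge_game_edges)
  consider "x 1 = 2" | "x 1 = 1" "x 2 = 2" | "x 1 = 1" "x 2 = 3"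
    using from0[OF start] from1[of 1] by (metis One_nat_def Suc_1)
  then show ?thesis
  proof cases
    case 1
    with from2[of 1] from3[of 2] have "map x [0..<length (route_states Via2)] = route_states Via2"
      using start by (simp add: upt_rec numeral_eq_Suc)
    then show ?thesis by (rule that)
  next
    case 2
    with from2[of 2] from3[of 3] have "map x [0..<length (route_states Via12)] = route_states Via12"
      using start by (simp add: upt_rec numeral_eq_Suc)
    then show ?thesis by (rule that)
  next
    case 3
    with from3[of 2] have "map x [0..<length (route_states Via13)] = route_states Via13"
      using start by (simp add: upt_rec numeral_eq_Suc)
    then show ?thesis by (rule that)
  qed
qed

lemma edge_walk_follows_route:
  assumes start: "x 0 = 0" and step: "\<And>k. is_edge game_edges (x k) (x (Suc k))"
  shows "\<exists>r. x = follow r"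
proof -
  obtain r where r: "map x [0..<length (route_states r)] = route_states r"
    using edge_walk_prefix_route[OF start step] .
  have "x k = follow r k" for k
  proof (cases "k < length (route_states r)")
    case True
    then have "x k = map x [0..<length (route_states r)] ! k"
      by simp
    then show ?thesis using True by (simp add: r follow_def)
  next
    case False
    let ?K = "length (route_states r) - 1"
    have "x ?K = 4"
      using arg_cong[OF r, of last] by (cases r) (simp_all add: last_map)
    then show ?thesis
      using edge_walk_stays_at_target[of x, OF step, of ?K "k - ?K"] False by (simp add: follow_def)
  qed
  then show ?thesis by blast
qed

lemma follow_reaches_target:
  "follow r (length (route_states r) - 1) = 4"
  "k < length (route_states r) - 1 \<Longrightarrow> follow r k \<noteq> 4"
  by (cases r; auto simp: follow_def less_Suc_eq numeral_eq_Suc)+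

definition route_cost :: "route \<Rightarrow> route \<Rightarrow> nat" where
  "route_cost p q = shared_walk_cost game_edges (follow p) (follow q) (length (route_states p) - 1)"

lemma route_cost_table:
  "route_cost Via2 Via2 = 9"   "route_cost Via2 Via12 = 4"  "route_cost Via2 Via13 = 7"
  "route_cost Via12 Via2 = 4"  "route_cost Via12 Via12 = 14" "route_cost Via12 Via13 = 6"
  "route_cost Via13 Via2 = 4"  "route_cost Via13 Via12 = 3"  "route_cost Via13 Via13 = 7"
  by (simp_all add: route_cost_def shared_walk_cost_def follow_def game_edges_def solo_shared_def
      numeral_eq_Suc)

lemma valid_profile_follows_route:
  assumes "valid_profile game_states game_edges 2 \<sigma>" "i < 2"
  obtains r where "\<And>k. pos 0 2 \<sigma> k i = follow r k"
proof -
  have "\<exists>r. (\<lambda>k. pos 0 2 \<sigma> k i) = follow r"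
    by (rule edge_walk_follows_route) (use valid_profile_pos_step[OF arena_game assms] in simp_all)
  then show ?thesis using that by metis
qed

lemma cost_follow_routes:
  assumes "i < 2" "\<And>k. pos 0 2 \<sigma> k i = follow p k" "\<And>k. pos 0 2 \<sigma> k (1 - i) = follow q k"
  shows "cost game_edges 0 4 2 \<sigma> i = enat (route_cost p q)"
  unfolding route_cost_def
  by (rule cost_two_players[OF assms]) (use follow_reaches_target in auto)

definition go_via2 :: "nat \<Rightarrow> nat" where
  "go_via2 v = (if v \<le> 1 then 2 else min (Suc v) 4)"

definition go_via13 :: "nat \<Rightarrow> nat" where
  "go_via13 v = (if v = 0 then 1 else if v \<le> 2 then 3 else 4)"

definition watchful :: strategy where
  "watchful h = (if last h 1 = 1 \<and> last h 0 = 1 then 3 else min (Suc (last h 1)) 4)"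

definition equilibrium :: profile where
  "equilibrium = (\<lambda>_. watchful)(0 := walk_strategy 0 go_via2)"

lemma valid_go_via2: "valid_strategy game_states game_edges i (walk_strategy i go_via2)"
  by (rule valid_walk_strategy) (auto simp: game_states_def go_via2_def is_edge_game_edges)

lemma valid_go_via13: "valid_strategy game_states game_edges i (walk_strategy i go_via13)"
  by (rule valid_walk_strategy) (auto simp: game_states_def go_via13_def is_edge_game_edges)

lemma valid_watchful: "valid_strategy game_states game_edges 1 watchful"
  by (auto simp: valid_strategy_def game_states_def watchful_def is_edge_game_edges)

lemma walk_strategy_route:
  assumes "\<sigma> i = walk_strategy i f" "i < 2" "\<And>k. pos 0 2 \<sigma> k i = follow p k"
    "follow r 1 = f 0" "follow r 2 = f (f 0)"
  shows "p = r"
proof (rule route_eqI)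
  have "pos 0 2 \<sigma> (Suc k) i = f (pos 0 2 \<sigma> k i)" for k
    using assms(1,2) by (rule pos_Suc_walk_strategy)
  from this[of 0] this[of 1] show "follow p 1 = follow r 1" "follow p 2 = follow r 2"
    using assms(3-5) by (simp_all add: numeral_2_eq_2)
qed

lemma watchful_route:
  assumes "\<sigma> 1 = watchful" "\<And>k. pos 0 2 \<sigma> k 0 = follow p k" "\<And>k. pos 0 2 \<sigma> k 1 = follow q k"
  shows "q = (if p = Via2 then Via12 else Via13)"
proof (rule route_eqI)
  have "pos 0 2 \<sigma> (Suc k) 1 =
      (if pos 0 2 \<sigma> k 1 = 1 \<and> pos 0 2 \<sigma> k 0 = 1 then 3 else min (Suc (pos 0 2 \<sigma> k 1)) 4)" for k
    using assms(1) by (simp add: pos_Suc watchful_def last_hist)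
  from this[of 0] this[of 1] assms(2,3)
  show "follow q 1 = follow (if p = Via2 then Via12 else Via13) 1"
    "follow q 2 = follow (if p = Via2 then Via12 else Via13) 2"
    by (cases p; simp add: follow_def numeral_2_eq_2)+
qed

lemma valid_profile_equilibrium_update:
  "valid_strategy game_states game_edges i \<tau> \<Longrightarrow> valid_profile game_states game_edges 2 (equilibrium(i := \<tau>))"
  unfolding valid_profile_def equilibrium_def using valid_go_via2 valid_watchful less_2_cases by auto

lemma valid_profile_equilibrium: "valid_profile game_states game_edges 2 equilibrium"
  using valid_profile_equilibrium_update[OF valid_go_via2, of 0] by (simp add: equilibrium_def)

lemma equilibrium_cost:
  assumes "i < 2"
  shows "cost game_edges 0 4 2 equilibrium i = 4"
proof -
  obtain p where p: "\<And>k. pos 0 2 equilibrium k 0 = follow p k"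
    by (rule valid_profile_follows_route[OF valid_profile_equilibrium, of 0]) auto
  obtain q where q: "\<And>k. pos 0 2 equilibrium k 1 = follow q k"
    by (rule valid_profile_follows_route[OF valid_profile_equilibrium, of 1]) auto
  have "p = Via2"
    by (rule walk_strategy_route[where f = go_via2, OF _ _ p])
      (simp_all add: equilibrium_def go_via2_def follow_def)
  moreover have "q = Via12"
    using watchful_route[OF _ p q] \<open>p = Via2\<close> by (simp add: equilibrium_def)
  ultimately have "cost game_edges 0 4 2 equilibrium 0 = enat (route_cost Via2 Via12)"
    "cost game_edges 0 4 2 equilibrium 1 = enat (route_cost Via12 Via2)"
    using cost_follow_routes[of 0 equilibrium p q] cost_follow_routes[of 1 equilibrium q p] p q
    by simp_all
  then show ?thesis
    using assms by (auto simp: less_2_cases_iff route_cost_table numeral_eq_enat)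
qed

lemma nash_eq_equilibrium: "nash_eq game_states game_edges 0 4 2 equilibrium"
  unfolding nash_eq_def
proof (intro conjI allI impI)
  show "valid_profile game_states game_edges 2 equilibrium"
    by (rule valid_profile_equilibrium)
  fix i \<tau>
  assume i: "i < 2" and \<tau>: "valid_strategy game_states game_edges i \<tau>"
  let ?\<sigma> = "equilibrium(i := \<tau>)"
  have valid: "valid_profile game_states game_edges 2 ?\<sigma>"
    by (rule valid_profile_equilibrium_update[OF \<tau>])
  obtain p where p: "\<And>k. pos 0 2 ?\<sigma> k 0 = follow p k"
    by (rule valid_profile_follows_route[OF valid, of 0]) auto
  obtain q where q: "\<And>k. pos 0 2 ?\<sigma> k 1 = follow q k"
    by (rule valid_profile_follows_route[OF valid, of 1]) auto
  consider "i = 0" | "i = 1"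
    using i by linarith
  then show "cost game_edges 0 4 2 equilibrium i \<le> cost game_edges 0 4 2 ?\<sigma> i"
  proof cases
    case 1
    have "q = (if p = Via2 then Via12 else Via13)"
      using watchful_route[OF _ p q] 1 by (simp add: equilibrium_def)
    then have "4 \<le> route_cost p q"
      by (cases p) (simp_all add: route_cost_table)
    then show ?thesis
      using equilibrium_cost[OF i] cost_follow_routes[of 0 ?\<sigma> p q] p q 1
      by (simp add: numeral_eq_enat)
  next
    case 2
    have "p = Via2"
      by (rule walk_strategy_route[where f = go_via2, OF _ _ p])
        (use 2 in \<open>simp_all add: equilibrium_def go_via2_def follow_def\<close>)
    then have "4 \<le> route_cost q p"
      by (cases q) (simp_all add: route_cost_table)
    then show ?thesis
      using equilibrium_cost[OF i] cost_follow_routes[of 1 ?\<sigma> q p] p q 2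
      by (simp add: numeral_eq_enat)
  qed
qed

lemma blind_nash_eq_deviation_via13:
  assumes blind: "blind_nash_eq game_states game_edges 0 4 2 \<sigma>" and i: "i < 2"
    and p: "\<And>k. pos 0 2 \<sigma> k i = follow p k" and q: "\<And>k. pos 0 2 \<sigma> k (1 - i) = follow q k"
  shows "route_cost p q \<le> route_cost Via13 q"
proof -
  let ?\<sigma>' = "\<sigma>(i := walk_strategy i go_via13)"
  have valid: "valid_profile game_states game_edges 2 ?\<sigma>'"
    using blind valid_go_via13 by (simp add: blind_nash_eq_def valid_profile_def)
  obtain p' where p': "\<And>k. pos 0 2 ?\<sigma>' k i = follow p' k"
    using valid_profile_follows_route[OF valid i] by blast
  have "p' = Via13"
    by (rule walk_strategy_route[where f = go_via13, OF _ i p'])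
      (simp_all add: go_via13_def follow_def)
  moreover have "pos 0 2 ?\<sigma>' k (1 - i) = follow q k" for k
  proof -
    have other: "1 - i \<noteq> i" "1 - i < 2"
      using i by arith+
    then have "blind_strategy (1 - i) (\<sigma> (1 - i))"
      using blind by (simp add: blind_nash_eq_def)
    then show ?thesis
      using blind_player_pos[of "1 - i" \<sigma> ?\<sigma>' 2] other q by simp
  qed
  ultimately have "cost game_edges 0 4 2 ?\<sigma>' i = enat (route_cost Via13 q)"
    using cost_follow_routes[OF i p'] by simp
  moreover have "cost game_edges 0 4 2 \<sigma> i \<le> cost game_edges 0 4 2 ?\<sigma>' i"
    using blind i valid_go_via13 blind_walk_strategy by (simp add: blind_nash_eq_def)
  ultimately show ?thesis
    using cost_follow_routes[OF i p q] by simp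
qed

lemma blind_nash_eq_social_cost:
  assumes blind: "blind_nash_eq game_states game_edges 0 4 2 \<sigma>"
  shows "8 < social_cost game_edges 0 4 2 \<sigma>"
proof -
  have valid: "valid_profile game_states game_edges 2 \<sigma>"
    using blind by (simp add: blind_nash_eq_def)
  obtain p where p: "\<And>k. pos 0 2 \<sigma> k 0 = follow p k"
    by (rule valid_profile_follows_route[OF valid, of 0]) auto
  obtain q where q: "\<And>k. pos 0 2 \<sigma> k 1 = follow q k"
    by (rule valid_profile_follows_route[OF valid, of 1]) auto
  have "route_cost p q \<le> route_cost Via13 q"
    using blind_nash_eq_deviation_via13[OF blind, of 0 p q] p q[unfolded One_nat_def] by simp
  moreover have "route_cost q p \<le> route_cost Via13 p"
    using blind_nash_eq_deviation_via13[OF blind, of 1 q p] p q by simp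
  ultimately have "8 < route_cost p q + route_cost q p"
    by (cases p; cases q) (simp_all add: route_cost_table)
  then show ?thesis
    using cost_follow_routes[of 0 \<sigma> p q] cost_follow_routes[of 1 \<sigma> q p] p q
    by (simp add: social_cost_two_players numeral_eq_enat)
qed

theorem mainTheorem4:
  shows "\<exists>V E src tgt n \<pi>. arena V E src tgt \<and> nash_eq V E src tgt n \<pi> \<and>
     (\<forall>\<pi>'. blind_nash_eq V E src tgt n \<pi>' \<longrightarrow>
        social_cost E src tgt n \<pi> < social_cost E src tgt n \<pi>')"
proof (intro exI conjI allI impI)
  show "arena game_states game_edges 0 4"
    by (rule arena_game)
  show "nash_eq game_states game_edges 0 4 2 equilibrium"
    by (rule nash_eq_equilibrium)
  have "social_cost game_edges 0 4 2 equilibrium = 8"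
    by (simp add: social_cost_two_players equilibrium_cost)
  then show "social_cost game_edges 0 4 2 equilibrium < social_cost game_edges 0 4 2 \<pi>'"
    if "blind_nash_eq game_states game_edges 0 4 2 \<pi>'" for \<pi>'
    using blind_nash_eq_social_cost[OF that] by simp
qed

end
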